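(* Let $c:\mathbb{R}^{n_x}\to\mathbb{R}^m$ be a smooth function with $c(x)=(c_1(x),\dots,c_m(x))$ such that $\nabla c(x)\in\mathbb{R}^{n_x\times m}$ has rank $m$. Let $S\in\mathbb{R}^{2^m\times m}$ be a matrix whose rows are pairwise distinct and whose entries all lie in $\{-1,1\}$ (so its rows are exactly the $2^m$ sign vectors), and denote by $S_{i,\bullet}$ its $i$-th row. For $i\in\{1,\dots,2^m\}$ define $$R'_i=\{x\in\mathbb{R}^{n_x}\mid \mathrm{diag}(S_{i,\bullet})\,c(x)>0\}$$ (componentwise inequality), and define $g:\mathbb{R}^{n_x}\to\mathbb{R}^{2^m}$ by $g(x)=-S\,c(x)$, with components $g_i(x)$. Let $$R_i=\{x\in\mathbb{R}^{n_x}\mid g_i(x)<\min_{j\neq i} g_j(x)\}.$$ Then for every $i$ and every $x\in R'_i$ the following hold: (i) $g_i(x)<g_j(x)$ for all $j\neq i$; (ii) the two definitions describe the same set, i.e., $R_i=R'_i$.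
   Context: $\mathrm{diag}(v)$ denotes the diagonal matrix with the entries of the vector $v$ on its diagonal. *)

theory Defs
  imports "HOL-Analysis.Analysis"
begin

definition partial_deriv :: "'n::finite \<Rightarrow> (real^'n \<Rightarrow> real) \<Rightarrow> real^'n \<Rightarrow> real" where
  "partial_deriv i f x = (THE d. ((\<lambda>t. f (x + t *\<^sub>R axis i 1)) has_real_derivative d) (at 0))"

definition iter_partial :: "'n::finite list \<Rightarrow> (real^'n \<Rightarrow> real) \<Rightarrow> real^'n \<Rightarrow> real" where
  "iter_partial is f = foldr partial_deriv is f"

definition smooth_scalar :: "(real^'n::finite \<Rightarrow> real) \<Rightarrow> bool" where
  "smooth_scalar f \<longleftrightarrow>
     (\<forall>is. continuous_on UNIV (iter_partial is f)) \<and>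
     (\<forall>is i x. (\<lambda>t. iter_partial is f (x + t *\<^sub>R axis i 1)) differentiable (at 0))"

definition smooth_map :: "(real^'n::finite \<Rightarrow> real^'m::finite) \<Rightarrow> bool" where
  "smooth_map c \<longleftrightarrow> (\<forall>j. smooth_scalar (\<lambda>x. c x $ j))"

text \<open>Gradient (transposed Jacobian) \<nabla>c(x) \<in> R^{n_x \<times> m}: entry (k,j) = d c_j / d x_k.\<close>
definition grad :: "(real^'n::finite \<Rightarrow> real^'m::finite) \<Rightarrow> real^'n \<Rightarrow> real^'m^'n" where
  "grad c x = (\<chi> k j. partial_deriv k (\<lambda>y. c y $ j) x)"

definition diag :: "real^'m::finite \<Rightarrow> real^'m^'m" where
  "diag v = (\<chi> a b. if a = b then v $ a else 0)"

end

theory Submission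
  imports Defs
begin

text \<open>Row \<open>k\<close> of \<open>S\<close> is a sign vector, so \<open>-g\<^sub>k(x) = \<langle>S\<^sub>k, c(x)\<rangle>\<close> is maximised
  over all sign vectors exactly by the one agreeing in sign with \<open>c(x)\<close> in every coordinate:
  each coordinate contributes at most \<open>|c\<^sub>l(x)|\<close>, and flipping a coordinate \<open>l\<close> of a sign
  vector \<open>s\<close> changes the inner product by \<open>-2 s\<^sub>l c\<^sub>l(x)\<close>. Because the rows of \<open>S\<close> are
  distinct and there are \<open>2\<^sup>m\<close> of them, they are all the sign vectors.\<close>

definition sign_vectors :: "(real^'m::finite) set" where
  "sign_vectors = {v. \<forall>l. v $ l \<in> {-1, 1}}"

definition flip_coord :: "'m::finite \<Rightarrow> real^'m \<Rightarrow> real^'m" where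
  "flip_coord j v = (\<chi> l. if l = j then - v $ l else v $ l)"

lemma diag_mult_vec_nth: "(diag v *v y) $ a = v $ a * y $ a"
proof -
  have "(diag v *v y) $ a = (\<Sum>j\<in>UNIV. if j = a then v $ a * y $ j else 0)"
    unfolding diag_def matrix_vector_mult_def by (simp only: vec_lambda_beta) (rule sum.cong, auto)
  also have "\<dots> = v $ a * y $ a" by (simp add: sum.delta)
  finally show ?thesis .
qed

lemma sign_vectors_eq_image_PiE:
  "sign_vectors = vec_lambda ` (PiE UNIV (\<lambda>_. {-1, 1::real}))"
proof
  show "sign_vectors \<subseteq> vec_lambda ` (PiE UNIV (\<lambda>_. {-1, 1::real}))"
  proof
    fix v assume "v \<in> sign_vectors"
    then have "vec_nth v \<in> PiE UNIV (\<lambda>_. {-1, 1::real})" by (auto simp: sign_vectors_def)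
    then show "v \<in> vec_lambda ` (PiE UNIV (\<lambda>_. {-1, 1::real}))"
      by (metis image_eqI vec_nth_inverse)
  qed
qed (auto simp: sign_vectors_def)

lemma finite_sign_vectors: "finite sign_vectors"
  unfolding sign_vectors_eq_image_PiE by (intro finite_imageI finite_PiE) auto

lemma card_sign_vectors: "card (sign_vectors :: (real^'m::finite) set) = 2 ^ CARD('m)"
proof -
  have "inj_on vec_lambda (PiE (UNIV :: 'm set) (\<lambda>_. {-1, 1::real}))"
    by (auto intro: inj_onI simp: vec_lambda_inject)
  then show ?thesis
    unfolding sign_vectors_eq_image_PiE by (simp add: card_image card_PiE numeral_2_eq_2)
qed

lemma range_rows_eq_sign_vectors:
  fixes S :: "real^'m::finite^'k::finite"
  assumes "CARD('k) = 2 ^ CARD('m)" and "inj (($) S)" and "\<forall>i j. S $ i $ j \<in> {-1, 1}"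
  shows "range (($) S) = sign_vectors"
proof (rule card_subset_eq[OF finite_sign_vectors])
  show "range (($) S) \<subseteq> sign_vectors" using assms(3) by (auto simp: sign_vectors_def)
  show "card (range (($) S)) = card (sign_vectors :: (real^'m) set)"
    using assms(1,2) by (simp add: card_image card_sign_vectors)
qed

lemma flip_coord_in_sign_vectors: "v \<in> sign_vectors \<Longrightarrow> flip_coord j v \<in> sign_vectors"
  by (auto simp: sign_vectors_def flip_coord_def)

lemma flip_coord_neq:
  assumes "v \<in> sign_vectors" shows "flip_coord j v \<noteq> v"
proof
  assume "flip_coord j v = v"
  then have "flip_coord j v $ j = v $ j" by simp
  then have "v $ j = - v $ j" by (simp add: flip_coord_def)
  then have "v $ j = 0" by simp
  moreover have "v $ j \<in> {-1, 1}" using assms by (simp add: sign_vectors_def)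
  ultimately show False by simp
qed

lemma inner_flip_coord: "flip_coord j v \<bullet> y = v \<bullet> y - 2 * v $ j * y $ j"
proof -
  have "flip_coord j v \<bullet> y = (\<Sum>l\<in>UNIV. v $ l * y $ l + (if l = j then - 2 * v $ j * y $ j else 0))"
    by (auto simp: inner_vec_def flip_coord_def intro: sum.cong)
  then show ?thesis by (simp add: sum.distrib inner_vec_def)
qed

lemma inner_less_sign_agreeing:
  assumes "s \<in> sign_vectors" "t \<in> sign_vectors" "t \<noteq> s" "\<forall>l. s $ l * y $ l > 0"
  shows "t \<bullet> y < s \<bullet> y"
proof -
  obtain l0 where "t $ l0 \<noteq> s $ l0" using assms(3) by (metis vec_eq_iff)
  have signs: "s $ l \<in> {-1, 1}" "t $ l \<in> {-1, 1}" for l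
    using assms(1,2) by (auto simp: sign_vectors_def)
  have "(\<Sum>l\<in>UNIV. t $ l * y $ l) < (\<Sum>l\<in>UNIV. s $ l * y $ l)"
  proof (rule sum_strict_mono_ex1)
    show "\<forall>l\<in>UNIV. t $ l * y $ l \<le> s $ l * y $ l"
    proof
      fix l
      show "t $ l * y $ l \<le> s $ l * y $ l" using signs[of l] assms(4)[rule_format, of l] by auto
    qed
    show "\<exists>l\<in>UNIV. t $ l * y $ l < s $ l * y $ l"
      using signs[of l0] assms(4)[rule_format, of l0] \<open>t $ l0 \<noteq> s $ l0\<close>
      by (intro bexI[of _ l0]) auto
  qed simp
  then show ?thesis by (simp add: inner_vec_def)
qed

lemma sign_vector_strict_argmax_iff:
  assumes "s \<in> sign_vectors"
  shows "(\<forall>t\<in>sign_vectors - {s}. t \<bullet> y < s \<bullet> y) \<longleftrightarrow> (\<forall>l. s $ l * y $ l > 0)"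
proof
  assume max: "\<forall>t\<in>sign_vectors - {s}. t \<bullet> y < s \<bullet> y"
  show "\<forall>l. s $ l * y $ l > 0"
  proof
    fix l
    have "flip_coord l s \<bullet> y < s \<bullet> y"
      using max assms flip_coord_in_sign_vectors flip_coord_neq by blast
    then show "s $ l * y $ l > 0" by (simp add: inner_flip_coord)
  qed
qed (use assms inner_less_sign_agreeing in blast)

theorem proposition1:
  fixes c :: "real^'n::finite \<Rightarrow> real^'m::finite"
    and S :: "real^'m^'k::finite"
    and R' R :: "'k \<Rightarrow> (real^'n) set"
    and g :: "real^'n \<Rightarrow> real^'k"
  assumes smooth: "smooth_map c"
    and rank_grad: "\<forall>x. rank (grad c x) = CARD('m)"
    and card_rows: "CARD('k) = 2 ^ CARD('m)"
    and rows_distinct: "inj (\<lambda>i. S $ i)"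
    and entries: "\<forall>i j. S $ i $ j \<in> {-1, 1}"
    and R'_def: "\<forall>i. R' i = {x. \<forall>j. (diag (S $ i) *v c x) $ j > 0}"
    and g_def: "\<forall>x. g x = - (S *v c x)"
    and R_def: "\<forall>i. R i = {x. g x $ i < Min {g x $ j | j. j \<noteq> i}}"
  shows "\<forall>i. \<forall>x\<in>R' i. (\<forall>j. j \<noteq> i \<longrightarrow> g x $ i < g x $ j) \<and> R i = R' i"
proof -
  have rows: "range (($) S) = sign_vectors"
    using range_rows_eq_sign_vectors[OF card_rows] rows_distinct entries by simp
  have g_nth: "g x $ k = - (S $ k \<bullet> c x)" for x k
    using g_def by (simp add: matrix_mult_dot)
  have strict_min_iff: "(\<forall>k. k \<noteq> i \<longrightarrow> g x $ i < g x $ k) \<longleftrightarrow> x \<in> R' i" for i x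
  proof -
    have "(\<forall>k. k \<noteq> i \<longrightarrow> g x $ i < g x $ k) \<longleftrightarrow> (\<forall>t\<in>sign_vectors - {S $ i}. t \<bullet> c x < S $ i \<bullet> c x)"
      unfolding g_nth rows[symmetric] by (auto simp: inj_eq[OF rows_distinct])
    also have "\<dots> \<longleftrightarrow> x \<in> R' i"
      using sign_vector_strict_argmax_iff[of "S $ i"] rows R'_def by (auto simp: diag_mult_vec_nth)
    finally show ?thesis .
  qed
  have R_iff: "x \<in> R i \<longleftrightarrow> (\<forall>k. k \<noteq> i \<longrightarrow> g x $ i < g x $ k)" for i x
  proof -
    have Si: "S $ i \<in> sign_vectors" using rows by blast
    then obtain k where "S $ k = flip_coord undefined (S $ i)"
      using flip_coord_in_sign_vectors rows by (metis rangeE)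
    then have "k \<noteq> i" using flip_coord_neq[OF Si, of undefined] by auto
    then have "{g x $ j | j. j \<noteq> i} \<noteq> {}" by blast
    then show ?thesis using R_def Min_gr_iff[of "{g x $ j | j. j \<noteq> i}"] by auto
  qed
  then have "R i = R' i" for i by (auto simp: strict_min_iff)
  with strict_min_iff show ?thesis by simp
qed

end
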